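(* Let $\mathcal{C}$ be a division Cayley algebra over a field $\mathbb{F}$ with norm $\mathrm{n}$. Let $\mathcal{K}$ be a two-dimensional composition subalgebra of $\mathcal{C}$, let $x\in\mathcal{C}$ be arbitrary, and let $\varphi$ be a local automorphism of $\mathcal{C}$. Then there is an automorphism $\psi$ of $\mathcal{C}$ such that $\psi|_{\mathcal{K}}=\varphi|_{\mathcal{K}}$ and $\psi(x)=\varphi(x)$.
   Context: A Cayley (octonion) algebra over $\mathbb{F}$ is a unital nonassociative algebra $\mathcal{C}$ of dimension $8$ over $\mathbb{F}$ endowed with a quadratic form $\mathrm{n}:\mathcal{C}\to\mathbb{F}$ (the norm) such that $\mathrm{n}(xy)=\mathrm{n}(x)\mathrm{n}(y)$ for all $x,y$ and whose polar form $\mathrm{n}(x,y)=\mathrm{n}(x+y)-\mathrm{n}(x)-\mathrm{n}(y)$ is nondegenerate. It is a division Cayley algebra if it is a division algebra (equivalently, $\mathrm{n}$ is anisotropic: $\mathrm{n}(x)\neq0$ for $x\neq0$). A two-dimensional composition subalgebra $\mathcal{K}$ is a two-dimensional subalgebra containing $1$ such that the restriction of $\mathrm{n}$ to $\mathcal{K}$ is regular (its polar form restricted to $\mathcal{K}$ is nondegenerate). A linear map $\varphi:\mathcal{C}\to\mathcal{C}$ is a local automorphism if for every $y\in\mathcal{C}$ there is an automorphism $\varphi_y$ of $\mathcal{C}$ with $\varphi(y)=\varphi_y(y)$. *)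

theory Defs
  imports Complex_Main
begin

text \<open>An algebra over a field 'k is modelled as a 'k-vector space 'v (given by the
  scalar multiplication sc) with a bilinear multiplication mul.\<close>

definition polar :: "('v::ab_group_add \<Rightarrow> 'k::field) \<Rightarrow> 'v \<Rightarrow> 'v \<Rightarrow> 'k" where
  "polar q x y = q (x + y) - q x - q y"

definition quadratic_form :: "('k::field \<Rightarrow> 'v::ab_group_add \<Rightarrow> 'v) \<Rightarrow> ('v \<Rightarrow> 'k) \<Rightarrow> bool" where
  "quadratic_form sc q \<longleftrightarrow>
     (\<forall>a x. q (sc a x) = a^2 * q x) \<and>
     (\<forall>x. Vector_Spaces.linear sc (*) (\<lambda>y. polar q x y))"

definition bilinear_mult :: "('k::field \<Rightarrow> 'v::ab_group_add \<Rightarrow> 'v) \<Rightarrow> ('v \<Rightarrow> 'v \<Rightarrow> 'v) \<Rightarrow> bool" where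
  "bilinear_mult sc mul \<longleftrightarrow>
     (\<forall>x. Vector_Spaces.linear sc sc (\<lambda>y. mul x y)) \<and>
     (\<forall>y. Vector_Spaces.linear sc sc (\<lambda>x. mul x y))"

definition cayley_algebra ::
  "('k::field \<Rightarrow> 'v::ab_group_add \<Rightarrow> 'v) \<Rightarrow> ('v \<Rightarrow> 'v \<Rightarrow> 'v) \<Rightarrow> 'v \<Rightarrow> ('v \<Rightarrow> 'k) \<Rightarrow> bool" where
  "cayley_algebra sc mul one nrm \<longleftrightarrow>
     vector_space sc \<and>
     vector_space.dim sc (UNIV :: 'v set) = 8 \<and>
     bilinear_mult sc mul \<and>
     (\<forall>x. mul one x = x \<and> mul x one = x) \<and>
     quadratic_form sc nrm \<and>
     (\<forall>x y. nrm (mul x y) = nrm x * nrm y) \<and>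
     (\<forall>x. (\<forall>y. polar nrm x y = 0) \<longrightarrow> x = 0)"

definition division_algebra :: "('v::ab_group_add \<Rightarrow> 'v \<Rightarrow> 'v) \<Rightarrow> bool" where
  "division_algebra mul \<longleftrightarrow> (\<forall>a. a \<noteq> 0 \<longrightarrow> bij (mul a) \<and> bij (\<lambda>x. mul x a))"

definition algebra_automorphism ::
  "('k::field \<Rightarrow> 'v::ab_group_add \<Rightarrow> 'v) \<Rightarrow> ('v \<Rightarrow> 'v \<Rightarrow> 'v) \<Rightarrow> ('v \<Rightarrow> 'v) \<Rightarrow> bool" where
  "algebra_automorphism sc mul f \<longleftrightarrow>
     Vector_Spaces.linear sc sc f \<and> bij f \<and> (\<forall>x y. f (mul x y) = mul (f x) (f y))"

definition local_automorphism ::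
  "('k::field \<Rightarrow> 'v::ab_group_add \<Rightarrow> 'v) \<Rightarrow> ('v \<Rightarrow> 'v \<Rightarrow> 'v) \<Rightarrow> ('v \<Rightarrow> 'v) \<Rightarrow> bool" where
  "local_automorphism sc mul \<phi> \<longleftrightarrow>
     Vector_Spaces.linear sc sc \<phi> \<and>
     (\<forall>y. \<exists>g. algebra_automorphism sc mul g \<and> \<phi> y = g y)"

definition two_dim_composition_subalgebra ::
  "('k::field \<Rightarrow> 'v::ab_group_add \<Rightarrow> 'v) \<Rightarrow> ('v \<Rightarrow> 'v \<Rightarrow> 'v) \<Rightarrow> 'v \<Rightarrow> ('v \<Rightarrow> 'k) \<Rightarrow> 'v set \<Rightarrow> bool" where
  "two_dim_composition_subalgebra sc mul one nrm K \<longleftrightarrow>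
     module.subspace sc K \<and> vector_space.dim sc K = 2 \<and> one \<in> K \<and>
     (\<forall>x\<in>K. \<forall>y\<in>K. mul x y \<in> K) \<and>
     (\<forall>x\<in>K. (\<forall>y\<in>K. polar nrm x y = 0) \<longrightarrow> x = 0)"

end

theory Submission
  imports Defs
begin

text \<open>By locality at a second basis vector of \<open>K\<close>, some automorphism \<open>h\<close> agrees with
  \<open>\<phi>\<close> on \<open>K\<close>, so \<open>\<phi>' = h\<inverse> \<circ> \<phi>\<close> fixes \<open>K\<close> pointwise and, being pointwise an
  automorphism, preserves the norm. Write \<open>x = k + w\<close> with \<open>k \<in> K\<close> and \<open>w \<perp> K\<close>; then
  \<open>w' = \<phi>' w\<close> is orthogonal to \<open>K\<close> with \<open>n(w') = n(w)\<close>. If \<open>w \<noteq> 0\<close>, the Cayley--Dickson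
  doubling \<open>K \<oplus> K w \<rightarrow> K \<oplus> K w'\<close>, identity on \<open>K\<close> and \<open>w \<mapsto> w'\<close>, is an isomorphism of
  four-dimensional composition subalgebras; doubling once more along a vector \<open>v\<close>
  orthogonal to both extends it to an automorphism \<open>g\<close> of the whole algebra (anisotropy
  makes \<open>n(w)\<close> and \<open>n(v)\<close> nonzero). Then \<open>\<psi> = h \<circ> g\<close>.\<close>

lemma algebra_automorphism_comp:
  "algebra_automorphism sc mul g \<Longrightarrow> algebra_automorphism sc mul h \<Longrightarrow>
    algebra_automorphism sc mul (g \<circ> h)"
  unfolding algebra_automorphism_def by (auto intro: Vector_Spaces.linear_compose bij_comp)

lemma algebra_automorphism_inv:
  assumes g: "algebra_automorphism sc mul g"
  shows "algebra_automorphism sc mul (inv g)"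
proof -
  have bij: "bij g" and lin: "Vector_Spaces.linear sc sc g"
    and hom: "\<And>x y. g (mul x y) = mul (g x) (g y)"
    using g by (simp_all add: algebra_automorphism_def)
  have add: "g (x + y) = g x + g y" and scale: "g (sc c x) = sc c (g x)" for x y c
    using lin by (simp_all add: Vector_Spaces.linear_iff)
  have inv_eq: "inv g y = x \<longleftrightarrow> g x = y" for x y
    using bij_inv_eq_iff[OF bij] by metis
  have g_inv: "g (inv g x) = x" for x
    using inv_eq by blast
  show ?thesis
    using lin bij_imp_bij_inv[OF bij]
    by (simp add: algebra_automorphism_def Vector_Spaces.linear_iff inv_eq add scale hom g_inv)
qed

lemma local_automorphism_comp:
  assumes h: "algebra_automorphism sc mul h" and \<phi>: "local_automorphism sc mul \<phi>"
  shows "local_automorphism sc mul (h \<circ> \<phi>)"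
  unfolding local_automorphism_def
proof (intro conjI allI)
  show "Vector_Spaces.linear sc sc (h \<circ> \<phi>)"
    using h \<phi> by (auto simp: algebra_automorphism_def local_automorphism_def intro: Vector_Spaces.linear_compose)
  fix y
  obtain g where "algebra_automorphism sc mul g" "\<phi> y = g y"
    using \<phi> by (auto simp: local_automorphism_def)
  then show "\<exists>g. algebra_automorphism sc mul g \<and> (h \<circ> \<phi>) y = g y"
    using algebra_automorphism_comp[OF h] by (metis comp_apply)
qed

locale composition_algebra = vs: vector_space sc
  for sc :: "'k::field \<Rightarrow> 'v::ab_group_add \<Rightarrow> 'v" +
  fixes mul :: "'v \<Rightarrow> 'v \<Rightarrow> 'v" and one :: 'v and nrm :: "'v \<Rightarrow> 'k"
  assumes bilinear: "bilinear_mult sc mul"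
    and mul_one_left [simp]: "mul one x = x"
    and mul_one_right [simp]: "mul x one = x"
    and quadratic: "quadratic_form sc nrm"
    and nrm_mul: "nrm (mul x y) = nrm x * nrm y"
    and nondegenerate: "(\<And>y. polar nrm x y = 0) \<Longrightarrow> x = 0"
    and one_neq_zero: "one \<noteq> 0"
begin

sublocale vp: vector_space_pair sc sc ..

abbreviation pol :: "'v \<Rightarrow> 'v \<Rightarrow> 'k" where "pol \<equiv> polar nrm"

lemma linear_mul_left: "Vector_Spaces.linear sc sc (mul x)"
  and linear_mul_right: "Vector_Spaces.linear sc sc (\<lambda>y. mul y x)"
  using bilinear by (auto simp: bilinear_mult_def)

lemma mul_add_right: "mul x (y + z) = mul x y + mul x z"
  and mul_add_left: "mul (y + z) x = mul y x + mul z x"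
  and mul_scale_right: "mul x (sc c y) = sc c (mul x y)"
  and mul_scale_left: "mul (sc c y) x = sc c (mul y x)"
  and mul_zero_right: "mul x 0 = 0"
  and mul_zero_left: "mul 0 x = 0"
  and mul_minus_right: "mul x (- y) = - mul x y"
  and mul_minus_left: "mul (- y) x = - mul y x"
  and mul_diff_right: "mul x (y - z) = mul x y - mul x z"
  and mul_diff_left: "mul (y - z) x = mul y x - mul z x"
  using vp.linear_add[OF linear_mul_left] vp.linear_add[OF linear_mul_right]
    vp.linear_scale[OF linear_mul_left] vp.linear_scale[OF linear_mul_right]
    vp.linear_0[OF linear_mul_left] vp.linear_0[OF linear_mul_right]
    vp.linear_neg[OF linear_mul_left] vp.linear_neg[OF linear_mul_right]
    vp.linear_diff[OF linear_mul_left] vp.linear_diff[OF linear_mul_right]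
  by simp_all

lemmas mul_simps = mul_add_right mul_add_left mul_scale_right mul_scale_left mul_zero_right
  mul_zero_left mul_minus_right mul_minus_left mul_diff_right mul_diff_left

lemma nrm_scale: "nrm (sc a x) = a\<^sup>2 * nrm x"
  using quadratic by (simp add: quadratic_form_def)

lemma linear_pol: "Vector_Spaces.linear sc (*) (pol x)"
  using quadratic by (simp add: quadratic_form_def)

lemma pol_commute: "pol x y = pol y x"
  by (simp add: polar_def add.commute)

lemma pol_add_right: "pol x (y + z) = pol x y + pol x z"
  and pol_scale_right: "pol x (sc c y) = c * pol x y"
  using linear_pol[of x] by (simp_all add: Vector_Spaces.linear_iff)

lemma pol_add_left: "pol (y + z) x = pol y x + pol z x"
  and pol_scale_left: "pol (sc c y) x = c * pol y x"
  by (simp_all add: pol_commute[of _ x] pol_add_right pol_scale_right)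

lemma pol_zero_right: "pol x 0 = 0"
  and pol_zero_left: "pol 0 x = 0"
  using pol_scale_right[of x 0 0] pol_scale_left[of 0 0 x] by simp_all

lemma pol_minus_right: "pol x (- y) = - pol x y"
  by (metis add_eq_0_iff pol_zero_right pol_add_right)

lemma pol_minus_left: "pol (- y) x = - pol y x"
  by (metis add_eq_0_iff pol_zero_left pol_add_left)

lemma pol_diff_right: "pol x (y - z) = pol x y - pol x z"
  and pol_diff_left: "pol (y - z) x = pol y x - pol z x"
  by (metis diff_conv_add_uminus pol_add_right pol_minus_right,
      metis diff_conv_add_uminus pol_add_left pol_minus_left)

lemmas pol_simps = pol_add_right pol_add_left pol_scale_right pol_scale_left pol_zero_right
  pol_zero_left pol_minus_right pol_minus_left pol_diff_right pol_diff_left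

lemma eq_iff_pol_eq: "x = y \<longleftrightarrow> (\<forall>z. pol x z = pol y z)"
  using nondegenerate[of "x - y"] by (auto simp: pol_diff_left)

lemma nrm_add: "nrm (x + y) = nrm x + nrm y + pol x y"
  by (simp add: polar_def)

lemma nrm_zero: "nrm 0 = 0"
  using nrm_scale[of 0 0] by simp

lemma pol_self: "pol x x = 2 * nrm x"
proof -
  have "nrm (x + x) = nrm (sc 2 x)"
    by (metis one_add_one vs.scale_left_distrib vs.scale_one)
  then show ?thesis by (simp add: polar_def nrm_scale power2_eq_square)
qed

lemma nrm_one: "nrm one = 1"
proof -
  have "nrm one \<noteq> 0"
  proof
    assume "nrm one = 0"
    then have "nrm x = 0" for x by (metis nrm_mul mul_one_left mult_zero_left)
    then show False using nondegenerate[of one] one_neq_zero by (simp add: polar_def)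
  qed
  moreover have "nrm one = nrm one * nrm one" by (metis nrm_mul mul_one_left)
  ultimately show ?thesis by (metis mult_cancel_left1)
qed

lemma pol_mul_left: "pol (mul x y) (mul x z) = nrm x * pol y z"
  using nrm_mul[of x "y + z"] by (simp add: mul_add_right nrm_add nrm_mul algebra_simps)

lemma pol_mul_right: "pol (mul y x) (mul z x) = nrm x * pol y z"
  using nrm_mul[of "y + z" x] by (simp add: mul_add_left nrm_add nrm_mul algebra_simps)

lemma pol_mul_left_linearized: "pol (mul x y) (mul w z) + pol (mul w y) (mul x z) = pol x w * pol y z"
  using pol_mul_left[of "x + w" y z]
  by (simp add: mul_add_left pol_simps pol_mul_left nrm_add algebra_simps
      pol_commute[of "mul w y" "mul x z"] pol_commute[of w x])

lemma pol_mul_right_linearized: "pol (mul y x) (mul z w) + pol (mul y w) (mul z x) = pol x w * pol y z"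
  using pol_mul_right[of y "x + w" z]
  by (simp add: mul_add_right pol_simps pol_mul_right nrm_add algebra_simps
      pol_commute[of "mul y w" "mul z x"] pol_commute[of w x])

definition tr :: "'v \<Rightarrow> 'k" where "tr x = pol x one"

definition cnj :: "'v \<Rightarrow> 'v" where "cnj x = sc (tr x) one - x"

lemma tr_one: "tr one = 2"
  by (simp add: tr_def pol_self nrm_one)

lemma tr_add: "tr (x + y) = tr x + tr y"
  and tr_scale: "tr (sc c x) = c * tr x"
  and tr_minus: "tr (- x) = - tr x"
  and tr_diff: "tr (x - y) = tr x - tr y"
  by (simp_all add: tr_def pol_simps)

lemma mul_cnj_left: "mul (cnj x) z = sc (tr x) z - mul x z"
  and mul_cnj_right: "mul z (cnj x) = sc (tr x) z - mul z x"
  by (simp_all add: cnj_def mul_simps)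

lemma cnj_add: "cnj (x + y) = cnj x + cnj y"
  and cnj_minus: "cnj (- x) = - cnj x"
  by (simp_all add: cnj_def tr_add tr_minus vs.scale_left_distrib vs.scale_minus_left)

lemma cnj_zero: "cnj 0 = 0"
  by (simp add: cnj_def tr_def pol_simps)

lemma cnj_cnj: "cnj (cnj x) = x"
  by (simp add: cnj_def tr_diff tr_scale tr_one)

lemma pol_mul_left_adjoint: "pol (mul x y) z = pol y (mul (cnj x) z)"
  using pol_mul_left_linearized[of x y one z] by (simp add: mul_cnj_left pol_simps tr_def eq_diff_eq)

lemma pol_mul_right_adjoint: "pol (mul y x) z = pol y (mul z (cnj x))"
  using pol_mul_right_linearized[of y x z one] by (simp add: mul_cnj_right pol_simps tr_def eq_diff_eq)

lemma cnj_mul_self: "mul (cnj x) x = sc (nrm x) one"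
  unfolding eq_iff_pol_eq
  using pol_mul_left_adjoint[of "cnj x" x] pol_mul_left[of x one] by (simp add: cnj_cnj pol_simps)

lemma mul_cnj_self: "mul x (cnj x) = sc (nrm x) one"
  unfolding eq_iff_pol_eq
  using pol_mul_right_adjoint[of x "cnj x"] pol_mul_right[of one x] by (simp add: cnj_cnj pol_simps)

lemma cnj_mul_mul: "mul (cnj x) (mul x y) = sc (nrm x) y"
  unfolding eq_iff_pol_eq
  using pol_mul_left_adjoint[of "cnj x" "mul x y"] pol_mul_left[of x y] by (simp add: cnj_cnj pol_simps)

lemma mul_mul_cnj: "mul (mul y x) (cnj x) = sc (nrm x) y"
  unfolding eq_iff_pol_eq
  using pol_mul_right_adjoint[of "mul y x" "cnj x"] pol_mul_right[of y x] by (simp add: cnj_cnj pol_simps)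

lemma cnj_mul_mul_linearized: "mul (cnj x) (mul w y) + mul (cnj w) (mul x y) = sc (pol x w) y"
  using cnj_mul_mul[of "x + w" y] cnj_mul_mul[of x y] cnj_mul_mul[of w y]
  by (simp add: cnj_add mul_simps nrm_add vs.scale_left_distrib algebra_simps pol_commute[of w x])

lemma mul_mul_cnj_linearized: "mul (mul y x) (cnj w) + mul (mul y w) (cnj x) = sc (pol x w) y"
  using mul_mul_cnj[of y "x + w"] mul_mul_cnj[of y x] mul_mul_cnj[of y w]
  by (simp add: cnj_add mul_simps nrm_add vs.scale_left_distrib algebra_simps pol_commute[of w x])

lemma mul_cnj_linearized: "mul x (cnj y) + mul y (cnj x) = sc (pol x y) one"
  using mul_cnj_self[of "x + y"] mul_cnj_self[of x] mul_cnj_self[of y]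
  by (simp add: cnj_add mul_simps nrm_add vs.scale_left_distrib algebra_simps)

lemma cnj_mul: "cnj (mul x y) = mul (cnj y) (cnj x)"
proof -
  have pol_cnj_one: "pol (cnj a) z = pol one (mul a z)" for a z
    using pol_mul_left_adjoint[of "cnj a" one z] by (simp add: cnj_cnj)
  have "pol (cnj (mul x y)) z = pol (mul (cnj y) (cnj x)) z" for z
    using pol_cnj_one[of "mul x y" z] pol_mul_right_adjoint[of "mul x y" z one]
      pol_mul_left_adjoint[of x y "cnj z"] pol_mul_left_adjoint[of "cnj y" "cnj x" z]
      pol_cnj_one[of x "mul y z"] pol_mul_right_adjoint[of y z "cnj x"]
    by (simp add: cnj_cnj pol_commute)
  then show ?thesis by (simp add: eq_iff_pol_eq)
qed

lemma mul_right_cancel: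
  assumes "nrm a \<noteq> 0" and "mul x a = mul y a"
  shows "x = y"
proof -
  have "sc (nrm a) (x - y) = mul (mul (x - y) a) (cnj a)"
    by (simp add: mul_mul_cnj)
  also have "\<dots> = 0"
    using assms(2) by (simp add: mul_simps)
  finally show ?thesis
    using assms(1) by simp
qed

lemma division_algebra_anisotropic:
  assumes "division_algebra mul" and "nrm x = 0"
  shows "x = 0"
proof (rule ccontr)
  assume "x \<noteq> 0"
  then have "cnj x \<noteq> 0"
    using cnj_cnj[of x] cnj_zero by metis
  then have "inj (mul (cnj x))"
    using assms(1) by (simp add: division_algebra_def bij_is_inj)
  moreover have "mul (cnj x) x = mul (cnj x) 0"
    using cnj_mul_self[of x] assms(2) by (simp add: mul_zero_right)
  ultimately show False
    using \<open>x \<noteq> 0\<close> by (meson injD)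
qed

lemma algebra_automorphism_id: "algebra_automorphism sc mul id"
  by (simp add: algebra_automorphism_def vs.linear_id)

lemma algebra_automorphism_one:
  assumes g: "algebra_automorphism sc mul g"
  shows "g one = one"
proof -
  obtain y where "g y = one"
    using g by (metis algebra_automorphism_def bij_is_surj surjD)
  then show ?thesis
    using g mul_one_right[of "g one"] by (metis algebra_automorphism_def mul_one_left)
qed

lemma mul_self: "mul z z = sc (tr z) z - sc (nrm z) one"
  using mul_cnj_self[of z] mul_cnj_right[of z z] by (simp add: algebra_simps)

text \<open>An automorphism preserves the quadratic equation of every element, and the
  coefficients of that equation are unique for elements outside the scalars.\<close>

lemma algebra_automorphism_nrm:
  assumes g: "algebra_automorphism sc mul g"
  shows "nrm (g z) = nrm z"
proof -
  have inj: "inj g" and lin: "Vector_Spaces.linear sc sc g" and g_one: "g one = one"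
    using g algebra_automorphism_one[OF g] by (simp_all add: algebra_automorphism_def bij_is_inj)
  have "g (mul z z) = sc (tr z) (g z) - sc (nrm z) one"
    using g_one by (simp add: mul_self vp.linear_diff[OF lin] vp.linear_scale[OF lin])
  moreover have "g (mul z z) = sc (tr (g z)) (g z) - sc (nrm (g z)) one"
    using g mul_self[of "g z"] by (simp add: algebra_automorphism_def)
  ultimately have eq: "sc (tr z - tr (g z)) (g z) = sc (nrm z - nrm (g z)) one"
    by (simp add: vs.scale_left_diff_distrib algebra_simps)
  have "tr z = tr (g z)"
  proof (rule ccontr)
    assume ne: "tr z \<noteq> tr (g z)"
    define c where "c = (nrm z - nrm (g z)) / (tr z - tr (g z))"
    have "g z = sc (inverse (tr z - tr (g z))) (sc (tr z - tr (g z)) (g z))"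
      using ne by simp
    also have "\<dots> = sc c one"
      unfolding eq c_def by (simp add: divide_inverse mult.commute)
    also have "\<dots> = g (sc c one)"
      using g_one by (simp add: vp.linear_scale[OF lin])
    finally have "z = sc c one"
      using inj by (simp add: inj_eq)
    then have "g z = z"
      using g_one by (simp add: vp.linear_scale[OF lin])
    then show False
      using ne by simp
  qed
  then show ?thesis
    using eq one_neq_zero by simp
qed

lemma local_automorphism_one: "local_automorphism sc mul \<phi> \<Longrightarrow> \<phi> one = one"
  by (metis local_automorphism_def algebra_automorphism_one)

lemma local_automorphism_nrm: "local_automorphism sc mul \<phi> \<Longrightarrow> nrm (\<phi> z) = nrm z"
  by (metis local_automorphism_def algebra_automorphism_nrm)

lemma local_automorphism_pol:
  assumes "local_automorphism sc mul \<phi>"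
  shows "pol (\<phi> x) (\<phi> y) = pol x y"
proof -
  have "\<phi> (x + y) = \<phi> x + \<phi> y"
    using assms by (simp add: local_automorphism_def vp.linear_add)
  then show ?thesis
    using local_automorphism_nrm[OF assms] by (metis polar_def)
qed

definition composition_subalgebra :: "'v set \<Rightarrow> bool" where
  "composition_subalgebra D \<longleftrightarrow> vs.subspace D \<and> one \<in> D \<and> (\<forall>x\<in>D. \<forall>y\<in>D. mul x y \<in> D) \<and>
     (\<forall>x\<in>D. (\<forall>y\<in>D. pol x y = 0) \<longrightarrow> x = 0)"

definition orthogonal_to :: "'v \<Rightarrow> 'v set \<Rightarrow> bool" where
  "orthogonal_to a D \<longleftrightarrow> (\<forall>d\<in>D. pol a d = 0)"

lemma two_dim_composition_subalgebra_iff: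
  "two_dim_composition_subalgebra sc mul one nrm K \<longleftrightarrow> composition_subalgebra K \<and> vs.dim K = 2"
  by (auto simp: two_dim_composition_subalgebra_def composition_subalgebra_def)

context
  fixes D assumes D: "composition_subalgebra D"
begin

lemma subalg_subspace: "vs.subspace D"
  and subalg_one: "one \<in> D"
  and subalg_mul: "x \<in> D \<Longrightarrow> y \<in> D \<Longrightarrow> mul x y \<in> D"
  and subalg_nondegenerate: "x \<in> D \<Longrightarrow> (\<And>y. y \<in> D \<Longrightarrow> pol x y = 0) \<Longrightarrow> x = 0"
  using D by (simp_all add: composition_subalgebra_def)

lemma subalg_add: "x \<in> D \<Longrightarrow> y \<in> D \<Longrightarrow> x + y \<in> D"
  and subalg_diff: "x \<in> D \<Longrightarrow> y \<in> D \<Longrightarrow> x - y \<in> D"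
  and subalg_minus: "x \<in> D \<Longrightarrow> - x \<in> D"
  and subalg_scale: "x \<in> D \<Longrightarrow> sc c x \<in> D"
  and subalg_zero: "0 \<in> D"
  using subalg_subspace
  by (simp_all add: vs.subspace_add vs.subspace_diff vs.subspace_neg vs.subspace_scale vs.subspace_0)

lemma subalg_cnj: "x \<in> D \<Longrightarrow> cnj x \<in> D"
  unfolding cnj_def by (intro subalg_diff subalg_scale subalg_one)

lemmas subalg_closed = subalg_one subalg_mul subalg_add subalg_diff subalg_minus subalg_scale
  subalg_zero subalg_cnj

lemma cnj_orthogonal: "orthogonal_to b D \<Longrightarrow> cnj b = - b"
  using subalg_one by (simp add: orthogonal_to_def cnj_def tr_def)

end

context
  fixes D a assumes D: "composition_subalgebra D" and a: "orthogonal_to a D"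
begin

lemma orthogonal_to_mul: "y \<in> D \<Longrightarrow> orthogonal_to (mul y a) D"
  using a by (simp add: orthogonal_to_def pol_mul_left_adjoint subalg_closed[OF D])

lemma mul_orthogonal_left: "x \<in> D \<Longrightarrow> mul a x = mul (cnj x) a"
  using mul_cnj_linearized[of a "cnj x"] a subalg_cnj[OF D]
  by (simp add: orthogonal_to_def cnj_cnj cnj_orthogonal[OF D a] mul_simps)

lemma mul_orthogonal_right: "x \<in> D \<Longrightarrow> mul x a = mul a (cnj x)"
  using mul_orthogonal_left[of "cnj x"] by (simp add: subalg_cnj[OF D] cnj_cnj)

lemma mul_mul_orthogonal_left: "x \<in> D \<Longrightarrow> y \<in> D \<Longrightarrow> mul (mul x a) y = mul (mul x (cnj y)) a"
  using mul_mul_cnj_linearized[of x a "cnj y"] a subalg_cnj[OF D]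
  by (simp add: orthogonal_to_def cnj_cnj cnj_orthogonal[OF D a] mul_simps)

lemma mul_mul_orthogonal_right: "x \<in> D \<Longrightarrow> y \<in> D \<Longrightarrow> mul x (mul y a) = mul (mul y x) a"
proof -
  assume x: "x \<in> D" and y: "y \<in> D"
  have "pol (cnj x) a = 0"
    using a subalg_cnj[OF D x] by (metis orthogonal_to_def pol_commute)
  then have "mul x (mul a (cnj y)) = mul a (mul (cnj x) (cnj y))"
    using cnj_mul_mul_linearized[of "cnj x" a "cnj y"]
    by (simp add: cnj_cnj cnj_orthogonal[OF D a] mul_simps)
  also have "\<dots> = mul (mul y x) a"
    using mul_orthogonal_left[of "cnj (mul y x)"] x y by (simp add: cnj_mul cnj_cnj subalg_closed[OF D])
  finally show ?thesis
    using mul_orthogonal_right[OF y] by simp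
qed

lemma mul_orthogonal_orthogonal:
  assumes x: "x \<in> D" and y: "y \<in> D"
  shows "mul (mul x a) (mul y a) = sc (- nrm a) (mul (cnj y) x)"
proof -
  have cnj_xa: "cnj (mul x a) = - mul x a"
    by (rule cnj_orthogonal[OF D orthogonal_to_mul[OF x]])
  have a_a: "mul a (mul a w) = sc (- nrm a) w" for w
    using cnj_mul_mul[of a w] cnj_orthogonal[OF D a]
    by (metis minus_minus mul_minus_left vs.scale_minus_left)
  have "pol (mul x a) a = nrm a * tr x"
    using pol_mul_right[of x a one] by (simp add: tr_def)
  then have "mul (mul x a) (mul y a) + sc (- nrm a) (cnj (mul x y)) = sc (- (nrm a * tr x)) (cnj y)"
    using cnj_mul_mul_linearized[of "cnj (mul x a)" a "cnj y"] x y
      mul_mul_orthogonal_left[of x "cnj y"] mul_orthogonal_right[of "mul x y"] mul_orthogonal_right[of y]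
    by (simp add: cnj_xa a_a cnj_cnj cnj_minus cnj_orthogonal[OF D a] subalg_closed[OF D] mul_simps pol_simps)
  then have "mul (mul x a) (mul y a) = sc (nrm a) (cnj (mul x y)) - sc (nrm a * tr x) (cnj y)"
    by (simp add: vs.scale_minus_left algebra_simps)
  also have "\<dots> = sc (- nrm a) (mul (cnj y) x)"
    by (simp add: cnj_mul mul_cnj_right vs.scale_right_diff_distrib vs.scale_minus_left)
  finally show ?thesis .
qed

lemma cayley_dickson_mul:
  "x \<in> D \<Longrightarrow> y \<in> D \<Longrightarrow> u \<in> D \<Longrightarrow> v \<in> D \<Longrightarrow>
    mul (x + mul y a) (u + mul v a) = (mul x u + sc (- nrm a) (mul (cnj v) y)) + mul (mul v x + mul y (cnj u)) a"
  by (simp add: mul_simps mul_mul_orthogonal_left mul_mul_orthogonal_right mul_orthogonal_orthogonal)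

end

definition double :: "'v set \<Rightarrow> 'v \<Rightarrow> 'v set" where
  "double D a = {x + mul y a | x y. x \<in> D \<and> y \<in> D}"

text \<open>For \<open>z \<in> double D a\<close> the decomposition \<open>z = x + mul y a\<close> is unique
  (\<open>double_unique\<close>); outside \<open>double D a\<close> the value of \<open>double_map\<close> is unspecified.\<close>

definition double_map :: "('v \<Rightarrow> 'v) \<Rightarrow> 'v set \<Rightarrow> 'v \<Rightarrow> 'v \<Rightarrow> 'v \<Rightarrow> 'v" where
  "double_map f D a a' z =
     (case SOME (x, y). x \<in> D \<and> y \<in> D \<and> z = x + mul y a of (x, y) \<Rightarrow> f x + mul (f y) a')"

text \<open>Compatibility with \<open>cnj\<close> is required because \<open>cnj\<close> occurs in the
  Cayley--Dickson product formula, so it is what makes doubled maps multiplicative.\<close>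

definition subalgebra_hom :: "('v \<Rightarrow> 'v) \<Rightarrow> 'v set \<Rightarrow> 'v set \<Rightarrow> bool" where
  "subalgebra_hom f D D' \<longleftrightarrow> f ` D \<subseteq> D' \<and> f one = one \<and>
     (\<forall>x\<in>D. \<forall>y\<in>D. f (x + y) = f x + f y \<and> f (mul x y) = mul (f x) (f y)) \<and>
     (\<forall>c. \<forall>x\<in>D. f (sc c x) = sc c (f x)) \<and> (\<forall>x\<in>D. f (cnj x) = cnj (f x))"

lemma doubleI: "x \<in> D \<Longrightarrow> y \<in> D \<Longrightarrow> x + mul y a \<in> double D a"
  unfolding double_def by blast

lemma doubleE:
  assumes "z \<in> double D a"
  obtains x y where "x \<in> D" "y \<in> D" "z = x + mul y a"
  using assms unfolding double_def by blast

lemma subalgebra_hom_id: "composition_subalgebra D \<Longrightarrow> subalgebra_hom id D D"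
  by (auto simp: subalgebra_hom_def)

context
  fixes D a
  assumes D: "composition_subalgebra D" and a: "orthogonal_to a D" and nrm_a: "nrm a \<noteq> 0"
begin

lemma double_unique:
  assumes "x \<in> D" "y \<in> D" "x' \<in> D" "y' \<in> D" and eq: "x + mul y a = x' + mul y' a"
  shows "x = x'" and "y = y'"
proof -
  have diff: "x - x' = mul (y' - y) a"
    using eq by (simp add: mul_diff_left algebra_simps)
  have "x - x' = 0"
  proof (rule subalg_nondegenerate[OF D])
    show "x - x' \<in> D"
      using assms by (simp add: subalg_closed[OF D])
    have "orthogonal_to (mul (y' - y) a) D"
      using assms by (intro orthogonal_to_mul[OF D a] subalg_closed[OF D])
    then show "pol (x - x') d = 0" if "d \<in> D" for d
      using that diff by (simp add: orthogonal_to_def)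
  qed
  then show "x = x'"
    by simp
  then show "y = y'"
    using diff \<open>x = x'\<close> mul_right_cancel[OF nrm_a, of y' y] by (simp add: mul_simps)
qed

lemma subalg_subset_double: "D \<subseteq> double D a"
  using doubleI[of _ D 0 a] by (auto simp: subalg_zero[OF D] mul_zero_left)

lemma orthogonal_in_double: "a \<in> double D a"
  using doubleI[of 0 D one a] by (simp add: subalg_closed[OF D])

lemma subspace_double: "vs.subspace (double D a)"
proof (rule vs.subspaceI)
  show "0 \<in> double D a"
    using subalg_subset_double subalg_zero[OF D] by blast
  show "z1 + z2 \<in> double D a" if "z1 \<in> double D a" "z2 \<in> double D a" for z1 z2
    using that by (elim doubleE) (simp add: add.assoc add.left_commute mul_add_left[symmetric]
        doubleI[of "_ + _" D "_ + _" a, simplified add.assoc] subalg_closed[OF D])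
  show "sc c z \<in> double D a" if "z \<in> double D a" for c z
    using that by (elim doubleE) (simp add: vs.scale_right_distrib mul_scale_left[symmetric]
        doubleI subalg_closed[OF D])
qed

lemma double_nondegenerate:
  assumes "z \<in> double D a" and orth: "\<And>w. w \<in> double D a \<Longrightarrow> pol z w = 0"
  shows "z = 0"
proof -
  obtain x y where x: "x \<in> D" and y: "y \<in> D" and z: "z = x + mul y a"
    using assms(1) by (elim doubleE)
  have "x = 0"
  proof (rule subalg_nondegenerate[OF D x])
    fix d assume "d \<in> D"
    then have "pol z d = 0"
      using orth subalg_subset_double by blast
    then show "pol x d = 0"
      using orthogonal_to_mul[OF D a y] \<open>d \<in> D\<close> by (simp add: z pol_simps orthogonal_to_def)
  qed
  moreover have "y = 0"
  proof (rule subalg_nondegenerate[OF D y])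
    fix d assume "d \<in> D"
    then have "pol z (mul d a) = 0"
      using orth doubleI[of 0 D d a] subalg_zero[OF D] by auto
    then show "pol y d = 0"
      using pol_mul_right[of y a d] nrm_a orthogonal_to_mul[OF D a \<open>d \<in> D\<close>] x
      by (simp add: z pol_simps orthogonal_to_def pol_commute)
  qed
  ultimately show "z = 0"
    by (simp add: z mul_zero_left)
qed

lemma composition_subalgebra_double: "composition_subalgebra (double D a)"
  unfolding composition_subalgebra_def
  using subspace_double subalg_subset_double subalg_one[OF D] double_nondegenerate
  by (auto elim!: doubleE simp: cayley_dickson_mul[OF D a] intro!: doubleI subalg_closed[OF D])

lemma double_map_eq:
  assumes "x \<in> D" "y \<in> D"
  shows "double_map f D a a' (x + mul y a) = f x + mul (f y) a'"
proof -
  have "(SOME (x', y'). x' \<in> D \<and> y' \<in> D \<and> x + mul y a = x' + mul y' a) = (x, y)"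
    using assms double_unique[OF assms] by (intro some_equality) auto
  then show ?thesis
    by (simp add: double_map_def)
qed

end

context
  fixes f D D' assumes D: "composition_subalgebra D" and f: "subalgebra_hom f D D'"
begin

lemma subalgebra_hom_mem: "x \<in> D \<Longrightarrow> f x \<in> D'"
  and subalgebra_hom_one: "f one = one"
  and subalgebra_hom_add: "x \<in> D \<Longrightarrow> y \<in> D \<Longrightarrow> f (x + y) = f x + f y"
  and subalgebra_hom_mul: "x \<in> D \<Longrightarrow> y \<in> D \<Longrightarrow> f (mul x y) = mul (f x) (f y)"
  and subalgebra_hom_scale: "x \<in> D \<Longrightarrow> f (sc c x) = sc c (f x)"
  and subalgebra_hom_cnj: "x \<in> D \<Longrightarrow> f (cnj x) = cnj (f x)"
  using f by (auto simp: subalgebra_hom_def)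

lemma subalgebra_hom_zero: "f 0 = 0"
  using subalgebra_hom_scale[of 0 0] subalg_zero[OF D] by simp

lemma subalgebra_hom_minus: "x \<in> D \<Longrightarrow> f (- x) = - f x"
  using subalgebra_hom_scale[of x "- 1"] by (simp add: vs.scale_minus_left)

lemmas subalgebra_hom_simps = subalgebra_hom_one subalgebra_hom_add subalgebra_hom_mul
  subalgebra_hom_scale subalgebra_hom_cnj subalgebra_hom_zero subalgebra_hom_minus

end

context
  fixes D D' a a' f
  assumes D: "composition_subalgebra D" and D': "composition_subalgebra D'"
    and a: "orthogonal_to a D" and a': "orthogonal_to a' D'"
    and nrm_a: "nrm a \<noteq> 0" and nrm_a': "nrm a' = nrm a"
    and f: "subalgebra_hom f D D'"
begin

private lemmas closed = subalg_closed[OF D] subalg_closed[OF D'] subalgebra_hom_mem[OF D f]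
  subalgebra_hom_simps[OF D f]

private abbreviation (input) g where "g \<equiv> double_map f D a a'"

lemma double_map_subalg: "x \<in> D \<Longrightarrow> g x = f x"
  using double_map_eq[OF D a nrm_a, of x 0] by (simp add: closed mul_zero_left)

lemma double_map_orthogonal: "g a = a'"
  using double_map_eq[OF D a nrm_a, of 0 one] by (simp add: closed)

lemma double_map_mem: "z \<in> double D a \<Longrightarrow> g z \<in> double D' a'"
  by (auto elim!: doubleE simp: double_map_eq[OF D a nrm_a] intro!: doubleI subalgebra_hom_mem[OF D f])

lemma double_map_add:
  assumes "z1 \<in> double D a" "z2 \<in> double D a"
  shows "g (z1 + z2) = g z1 + g z2"
proof -
  obtain x y u v where xyuv: "x \<in> D" "y \<in> D" "u \<in> D" "v \<in> D"
    and z: "z1 = x + mul y a" "z2 = u + mul v a"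
    using assms by (elim doubleE)
  have "g (z1 + z2) = g ((x + u) + mul (y + v) a)"
    by (simp add: z mul_add_left algebra_simps)
  also have "\<dots> = f (x + u) + mul (f (y + v)) a'"
    using xyuv by (intro double_map_eq[OF D a nrm_a]) (simp_all add: closed)
  finally show ?thesis
    using xyuv by (simp add: z double_map_eq[OF D a nrm_a] closed mul_add_left algebra_simps)
qed

lemma double_map_scale:
  assumes "z \<in> double D a"
  shows "g (sc c z) = sc c (g z)"
proof -
  obtain x y where xy: "x \<in> D" "y \<in> D" and z: "z = x + mul y a"
    using assms by (elim doubleE)
  have "g (sc c z) = g (sc c x + mul (sc c y) a)"
    by (simp add: z mul_scale_left vs.scale_right_distrib)
  also have "\<dots> = f (sc c x) + mul (f (sc c y)) a'"
    using xy by (intro double_map_eq[OF D a nrm_a]) (simp_all add: closed)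
  finally show ?thesis
    using xy by (simp add: z double_map_eq[OF D a nrm_a] closed mul_scale_left vs.scale_right_distrib)
qed

lemma double_map_mul:
  assumes "z1 \<in> double D a" "z2 \<in> double D a"
  shows "g (mul z1 z2) = mul (g z1) (g z2)"
proof -
  obtain x y u v where xyuv: "x \<in> D" "y \<in> D" "u \<in> D" "v \<in> D"
    and z: "z1 = x + mul y a" "z2 = u + mul v a"
    using assms by (elim doubleE)
  have "g (mul z1 z2) = f (mul x u + sc (- nrm a) (mul (cnj v) y)) + mul (f (mul v x + mul y (cnj u))) a'"
    using xyuv by (simp add: z cayley_dickson_mul[OF D a] double_map_eq[OF D a nrm_a] closed)
  also have "\<dots> = mul (f x + mul (f y) a') (f u + mul (f v) a')"
    using xyuv by (simp add: cayley_dickson_mul[OF D' a'] closed nrm_a' del: vs.scale_minus_left)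
  finally show ?thesis
    using xyuv by (simp add: z double_map_eq[OF D a nrm_a])
qed

lemma double_map_cnj:
  assumes "z \<in> double D a"
  shows "g (cnj z) = cnj (g z)"
proof -
  obtain x y where xy: "x \<in> D" "y \<in> D" and z: "z = x + mul y a"
    using assms by (elim doubleE)
  have "cnj z = cnj x + mul (- y) a"
    using cnj_orthogonal[OF D orthogonal_to_mul[OF D a xy(2)]] by (simp add: z cnj_add mul_minus_left)
  moreover have "cnj (g z) = cnj (f x) + mul (- f y) a'"
    using cnj_orthogonal[OF D' orthogonal_to_mul[OF D' a', of "f y"]] xy
    by (simp add: z double_map_eq[OF D a nrm_a] cnj_add mul_minus_left closed)
  ultimately show ?thesis
    using xy by (simp add: double_map_eq[OF D a nrm_a] closed)
qed

lemma subalgebra_hom_double_map: "subalgebra_hom g (double D a) (double D' a')"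
  using double_map_mem double_map_add double_map_scale double_map_mul double_map_cnj
    double_map_subalg[of one] by (auto simp: subalgebra_hom_def closed)

lemma inj_on_double_map:
  assumes "inj_on f D"
  shows "inj_on g (double D a)"
proof (rule inj_onI)
  fix z1 z2 assume "z1 \<in> double D a" "z2 \<in> double D a" and eq: "g z1 = g z2"
  then obtain x y u v where xyuv: "x \<in> D" "y \<in> D" "u \<in> D" "v \<in> D"
    and z: "z1 = x + mul y a" "z2 = u + mul v a"
    by (elim doubleE)
  have "f x + mul (f y) a' = f u + mul (f v) a'"
    using eq xyuv by (simp add: z double_map_eq[OF D a nrm_a])
  moreover have "nrm a' \<noteq> 0"
    using nrm_a nrm_a' by simp
  ultimately have "f x = f u" "f y = f v"
    using double_unique[OF D' a' _ subalgebra_hom_mem[OF D f] subalgebra_hom_mem[OF D f]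
        subalgebra_hom_mem[OF D f] subalgebra_hom_mem[OF D f]] xyuv
    by blast+
  then have "x = u" "y = v"
    using inj_onD[OF assms] xyuv by blast+
  then show "z1 = z2"
    by (simp add: z)
qed

lemma double_map_image:
  assumes "f ` D = D'"
  shows "g ` double D a = double D' a'"
proof
  show "g ` double D a \<subseteq> double D' a'"
    using subalgebra_hom_double_map by (simp add: subalgebra_hom_def)
  show "double D' a' \<subseteq> g ` double D a"
  proof
    fix w assume "w \<in> double D' a'"
    then obtain x' y' where "x' \<in> D'" "y' \<in> D'" and w: "w = x' + mul y' a'"
      by (elim doubleE)
    then obtain x y where "x \<in> D" "y \<in> D" "x' = f x" "y' = f y"
      using assms by blast
    then show "w \<in> g ` double D a"
      using w double_map_eq[OF D a nrm_a] doubleI by (metis image_eqI)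
  qed
qed

end

end

locale finite_dimensional_composition_algebra =
  composition_algebra sc mul one nrm + fd: finite_dimensional_vector_space sc basis
  for sc :: "'k::field \<Rightarrow> 'v::ab_group_add \<Rightarrow> 'v" and mul one nrm and basis :: "'v set"
begin

sublocale fp: finite_dimensional_vector_space_pair_1 sc basis sc ..

lemma exists_orthogonality_map:
  assumes W: "vs.subspace W"
  obtains T where "Vector_Spaces.linear sc sc T" "range T \<subseteq> W" "\<And>z. T z = 0 \<Longrightarrow> orthogonal_to z W"
proof -
  obtain B where B: "B \<subseteq> W" "vs.independent B" "W \<subseteq> vs.span B"
    using vs.basis_exists[of W] by metis
  have "finite B"
    using B(2) fd.finiteI_independent by blast
  define T where "T z = (\<Sum>e\<in>B. sc (pol e z) e)" for z
  have "Vector_Spaces.linear sc sc T"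
    unfolding Vector_Spaces.linear_iff T_def
    by (simp add: vs.vector_space_axioms pol_simps vs.scale_left_distrib sum.distrib vs.scale_sum_right)
  moreover have "T z \<in> W" for z
    unfolding T_def using B(1) by (intro vs.subspace_sum[OF W] vs.subspace_scale[OF W]) auto
  moreover have "orthogonal_to z W" if "T z = 0" for z
  proof -
    have "\<forall>e\<in>B. pol e z = 0"
      using vs.independentD[OF B(2) \<open>finite B\<close> subset_refl, of "\<lambda>e. pol e z"] that by (auto simp: T_def)
    moreover have "vs.subspace {d. pol d z = 0}"
      by (rule vs.subspaceI) (auto simp: pol_simps)
    ultimately have "vs.span B \<subseteq> {d. pol d z = 0}"
      by (intro vs.span_minimal) auto
    then have "W \<subseteq> {d. pol d z = 0}"
      using B(3) by blast
    then show ?thesis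
      by (auto simp: orthogonal_to_def pol_commute)
  qed
  ultimately show ?thesis
    using that by auto
qed

lemma exists_nonzero_orthogonal:
  assumes W: "vs.subspace W" and dim: "vs.dim W < vs.dim (UNIV :: 'v set)"
  shows "\<exists>v. v \<noteq> 0 \<and> orthogonal_to v W"
proof -
  obtain T where T: "Vector_Spaces.linear sc sc T" "range T \<subseteq> W" "\<And>z. T z = 0 \<Longrightarrow> orthogonal_to z W"
    using exists_orthogonality_map[OF W] by blast
  have "\<not> inj T"
  proof
    assume "inj T"
    then have "vs.dim (range T) = vs.dim (UNIV :: 'v set)"
      using fp.dim_image_eq[OF T(1), of UNIV] by simp
    moreover have "vs.dim (range T) \<le> vs.dim W"
      using fd.dim_subset[OF T(2)] .
    ultimately show False
      using dim by simp
  qed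
  then obtain v where "v \<noteq> 0" "T v = 0"
    using vp.linear_inj_iff_eq_0[OF T(1)] by blast
  then show ?thesis
    using T(3) by blast
qed

lemma orthogonal_decomposition:
  assumes W: "vs.subspace W" and nondeg: "\<forall>x\<in>W. (\<forall>y\<in>W. pol x y = 0) \<longrightarrow> x = 0"
  shows "\<exists>k\<in>W. orthogonal_to (z - k) W"
proof -
  obtain T where T: "Vector_Spaces.linear sc sc T" "range T \<subseteq> W" "\<And>z. T z = 0 \<Longrightarrow> orthogonal_to z W"
    using exists_orthogonality_map[OF W] by blast
  have "inj_on T W"
    unfolding vp.linear_inj_on_iff_eq_0[OF T(1) W]
    using T(3) nondeg by (auto simp: orthogonal_to_def)
  then have "vs.dim (T ` W) = vs.dim W"
    using fp.dim_image_eq[OF T(1), of W] vs.span_eq_iff[THEN iffD2, OF W] by simp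
  moreover have "T ` W \<subseteq> W"
    using T(2) by auto
  ultimately have "T ` W = W"
    using fd.subspace_dim_equal[OF vp.linear_subspace_image[OF T(1) W] W] by simp
  then obtain k where k: "k \<in> W" "T z = T k"
    using T(2) by (metis imageE rangeI subsetD)
  have "T (z - k) = 0"
    using k(2) vp.linear_diff[OF T(1)] by simp
  then show ?thesis
    using T(3) k(1) by blast
qed

lemma dim_double:
  assumes D: "composition_subalgebra D" and a: "orthogonal_to a D" and nrm_a: "nrm a \<noteq> 0"
  shows "vs.dim (double D a) = 2 * vs.dim D"
proof -
  let ?Da = "(\<lambda>y. mul y a) ` D"
  have sub_Da: "vs.subspace ?Da"
    by (rule vp.linear_subspace_image[OF linear_mul_right subalg_subspace[OF D]])
  have "double D a = {x + y | x y. x \<in> D \<and> y \<in> ?Da}"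
    unfolding double_def by blast
  then have "vs.dim (double D a) + vs.dim (D \<inter> ?Da) = vs.dim D + vs.dim ?Da"
    using fd.dim_sums_Int[OF subalg_subspace[OF D] sub_Da] by simp
  moreover have "D \<inter> ?Da = {0}"
    using double_unique(1)[OF D a nrm_a _ subalg_zero[OF D] subalg_zero[OF D]]
    by (auto simp: subalg_zero[OF D] mul_zero_left intro!: image_eqI[of _ _ 0])
  moreover have "vs.dim ?Da = vs.dim D"
    using fp.dim_image_eq[OF linear_mul_right] mul_right_cancel[OF nrm_a] by (simp add: inj_on_def)
  moreover have "vs.dim {0::'v} = 0"
    using fd.dim_insert[of 0 "{}"] by simp
  ultimately show ?thesis
    by simp
qed

text \<open>A two-dimensional subspace containing \<open>one\<close> is spanned by \<open>one\<close> and one further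
  vector \<open>u\<close>, so the automorphism that agrees with \<open>\<phi>\<close> at \<open>u\<close> agrees with it on all of \<open>K\<close>.\<close>

lemma local_automorphism_eq_automorphism_on_dim_2:
  assumes K: "vs.subspace K" "vs.dim K = 2" "one \<in> K" and \<phi>: "local_automorphism sc mul \<phi>"
  obtains h where "algebra_automorphism sc mul h" "\<And>k. k \<in> K \<Longrightarrow> \<phi> k = h k"
proof -
  obtain u where u: "u \<in> K" "u \<notin> vs.span {one}"
  proof -
    have "\<not> K \<subseteq> vs.span {one}"
      using vs.dim_le_card[of K "{one}"] K(2) by auto
    then show ?thesis
      using that by blast
  qed
  have "vs.independent {u, one}"
    using vs.independent_insertI[OF u(2)] one_neq_zero vs.dependent_single by simp
  moreover have "u \<noteq> one"
    using u(2) vs.span_base by blast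
  ultimately have K_span: "K \<subseteq> vs.span {u, one}"
    using fd.card_ge_dim_independent[of "{u, one}" K] u(1) K by auto
  obtain h where h: "algebra_automorphism sc mul h" "\<phi> u = h u"
    using \<phi> by (auto simp: local_automorphism_def)
  have "Vector_Spaces.linear sc sc \<phi>" "Vector_Spaces.linear sc sc h"
    using \<phi> h(1) by (simp_all add: local_automorphism_def algebra_automorphism_def)
  moreover have "\<phi> v = h v" if "v \<in> {u, one}" for v
    using that h local_automorphism_one[OF \<phi>] algebra_automorphism_one[OF h(1)] by auto
  ultimately have "\<phi> k = h k" if "k \<in> vs.span {u, one}" for k
    using vp.linear_eq_on_span that by blast
  then show ?thesis
    using that h(1) K_span by blast
qed

end

locale anisotropic_composition_algebra = finite_dimensional_composition_algebra sc mul one nrm basis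
  for sc :: "'k::field \<Rightarrow> 'v::ab_group_add \<Rightarrow> 'v" and mul one nrm basis +
  assumes anisotropic: "nrm x = 0 \<Longrightarrow> x = 0"
begin

lemma composition_subalgebra_dim_eq_UNIV:
  "composition_subalgebra E \<Longrightarrow> vs.dim E = vs.dim (UNIV :: 'v set) \<Longrightarrow> E = UNIV"
  using fd.subspace_dim_equal[of E UNIV] subalg_subspace by simp

text \<open>Since \<open>D\<close> and \<open>D'\<close> share \<open>one\<close>, their sum is a proper subspace, so some
  \<open>v \<noteq> 0\<close> is orthogonal to both; doubling \<open>D\<close> and \<open>D'\<close> along \<open>v\<close> extends \<open>f\<close> to the
  whole algebra.\<close>

lemma subalgebra_iso_extends:
  assumes D: "composition_subalgebra D" and D': "composition_subalgebra D'"
    and dim_D: "2 * vs.dim D = vs.dim (UNIV :: 'v set)" and dim_D': "vs.dim D' = vs.dim D"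
    and f: "subalgebra_hom f D D'" "inj_on f D" "f ` D = D'"
  obtains g where "algebra_automorphism sc mul g" "\<And>d. d \<in> D \<Longrightarrow> g d = f d"
proof -
  let ?W = "{x + y | x y. x \<in> D \<and> y \<in> D'}"
  have sub_W: "vs.subspace ?W"
    using vs.subspace_sums[OF subalg_subspace[OF D] subalg_subspace[OF D']] .
  have "vs.dim ?W + vs.dim (D \<inter> D') = vs.dim D + vs.dim D'"
    using fd.dim_sums_Int[OF subalg_subspace[OF D] subalg_subspace[OF D']] .
  moreover have "vs.dim {one} = 1"
    using vs.dim_eq_card_independent[of "{one}"] vs.dependent_single one_neq_zero by simp
  moreover have "vs.dim {one} \<le> vs.dim (D \<inter> D')"
    using subalg_one[OF D] subalg_one[OF D'] by (intro fd.dim_subset) auto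
  ultimately have "vs.dim ?W < vs.dim (UNIV :: 'v set)"
    using dim_D dim_D' by simp
  then obtain v where "v \<noteq> 0" and v: "orthogonal_to v ?W"
    using exists_nonzero_orthogonal[OF sub_W] by blast
  then have nrm_v: "nrm v \<noteq> 0"
    using anisotropic by blast
  have v_D: "orthogonal_to v D" and v_D': "orthogonal_to v D'"
    using v subalg_zero[OF D] subalg_zero[OF D'] by (fastforce simp: orthogonal_to_def)+
  have double_D: "double D v = UNIV" and double_D': "double D' v = UNIV"
    using composition_subalgebra_dim_eq_UNIV composition_subalgebra_double dim_double
      D D' v_D v_D' nrm_v dim_D dim_D' by auto
  define g where "g = double_map f D v v"
  have hom: "subalgebra_hom g UNIV UNIV"
    using subalgebra_hom_double_map[OF D D' v_D v_D' nrm_v refl f(1)] double_D double_D'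
    by (simp add: g_def)
  have "algebra_automorphism sc mul g"
    unfolding algebra_automorphism_def Vector_Spaces.linear_iff
  proof (intro conjI allI)
    show "bij g"
      using inj_on_double_map[OF D D' v_D v_D' nrm_v refl f(1,2)]
        double_map_image[OF D D' v_D v_D' nrm_v refl f(1,3)] double_D double_D'
      by (simp add: bij_def g_def)
  qed (use hom vs.vector_space_axioms in \<open>auto simp: subalgebra_hom_def\<close>)
  moreover have "g d = f d" if "d \<in> D" for d
    using double_map_subalg[OF D D' v_D v_D' nrm_v refl f(1) that] by (simp add: g_def)
  ultimately show ?thesis
    using that by blast
qed

lemma exists_automorphism_fixing_subalgebra:
  assumes K: "composition_subalgebra K" and dim_K: "4 * vs.dim K = vs.dim (UNIV :: 'v set)"
    and w: "orthogonal_to w K" and w': "orthogonal_to w' K" and nrm_w': "nrm w' = nrm w"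
  obtains g where "algebra_automorphism sc mul g" "\<And>k. k \<in> K \<Longrightarrow> g k = k" "g w = w'"
proof (cases "w = 0")
  case True
  then have "w' = 0"
    using nrm_w' anisotropic nrm_zero by simp
  then show ?thesis
    using that[OF algebra_automorphism_id] True by simp
next
  case False
  then have nrm_w: "nrm w \<noteq> 0"
    using anisotropic by blast
  have nrm_w'': "nrm w' \<noteq> 0"
    using nrm_w nrm_w' by simp
  define f where "f = double_map id K w w'"
  note doubling = K K w w' nrm_w nrm_w' subalgebra_hom_id[OF K]
  have "subalgebra_hom f (double K w) (double K w')" "inj_on f (double K w)"
    "f ` double K w = double K w'"
    unfolding f_def using subalgebra_hom_double_map[OF doubling]
      inj_on_double_map[OF doubling] double_map_image[OF doubling] by simp_all
  moreover have "2 * vs.dim (double K w) = vs.dim (UNIV :: 'v set)"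
    "vs.dim (double K w') = vs.dim (double K w)"
    using dim_double[OF K w nrm_w] dim_double[OF K w' nrm_w''] dim_K by simp_all
  ultimately obtain g where g: "algebra_automorphism sc mul g" "\<And>d. d \<in> double K w \<Longrightarrow> g d = f d"
    using subalgebra_iso_extends composition_subalgebra_double[OF K w nrm_w]
      composition_subalgebra_double[OF K w' nrm_w''] by metis
  have "g k = k" if "k \<in> K" for k
    using g(2) subalg_subset_double[OF K w nrm_w] double_map_subalg[OF doubling that] that
    by (auto simp: f_def)
  moreover have "g w = w'"
    using g(2) orthogonal_in_double[OF K w nrm_w] double_map_orthogonal[OF doubling] by (simp add: f_def)
  ultimately show ?thesis
    using that g(1) by blast
qed

theorem local_automorphism_agrees_on_subalgebra_and_point:
  assumes K: "composition_subalgebra K" "vs.dim K = 2" and dim: "vs.dim (UNIV :: 'v set) = 8"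
    and \<phi>: "local_automorphism sc mul \<phi>"
  shows "\<exists>\<psi>. algebra_automorphism sc mul \<psi> \<and> (\<forall>k\<in>K. \<psi> k = \<phi> k) \<and> \<psi> x = \<phi> x"
proof -
  obtain h where h: "algebra_automorphism sc mul h" "\<And>k. k \<in> K \<Longrightarrow> \<phi> k = h k"
    using local_automorphism_eq_automorphism_on_dim_2[OF subalg_subspace[OF K(1)] K(2)
        subalg_one[OF K(1)] \<phi>] by blast
  define \<phi>' where "\<phi>' = inv h \<circ> \<phi>"
  have \<phi>': "local_automorphism sc mul \<phi>'"
    unfolding \<phi>'_def by (rule local_automorphism_comp[OF algebra_automorphism_inv[OF h(1)] \<phi>])
  have h_inv: "h (inv h y) = y" "inv h (h y) = y" for y
    using h(1) by (simp_all add: algebra_automorphism_def bij_is_inj bij_is_surj surj_f_inv_f)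
  have \<phi>'_K: "\<phi>' k = k" if "k \<in> K" for k
    using h(2)[OF that] h_inv by (simp add: \<phi>'_def)
  obtain k where k: "k \<in> K" and w: "orthogonal_to (x - k) K"
    using orthogonal_decomposition[OF subalg_subspace[OF K(1)], of x] K(1)
    unfolding composition_subalgebra_def by blast
  have "orthogonal_to (\<phi>' (x - k)) K"
    using w local_automorphism_pol[OF \<phi>'] \<phi>'_K by (metis orthogonal_to_def)
  moreover have "4 * vs.dim K = vs.dim (UNIV :: 'v set)"
    using K(2) dim by simp
  ultimately obtain g where g: "algebra_automorphism sc mul g" "\<And>k. k \<in> K \<Longrightarrow> g k = k"
    "g (x - k) = \<phi>' (x - k)"
    using exists_automorphism_fixing_subalgebra[OF K(1) _ w] local_automorphism_nrm[OF \<phi>'] by blast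
  have "g x = g k + g (x - k)"
    using g(1) vp.linear_add[of g k "x - k"] by (simp add: algebra_automorphism_def)
  also have "\<dots> = \<phi>' k + \<phi>' (x - k)"
    using g(2,3) \<phi>'_K k by simp
  also have "\<dots> = \<phi>' x"
    using \<phi>' vp.linear_add[of \<phi>' k "x - k"] by (simp add: local_automorphism_def)
  finally have "(h \<circ> g) x = \<phi> x"
    using h_inv by (simp add: \<phi>'_def)
  moreover have "(h \<circ> g) k = \<phi> k" if "k \<in> K" for k
    using g(2) h(2) that by simp
  ultimately show ?thesis
    using algebra_automorphism_comp[OF h(1) g(1)] by blast
qed

end

lemma cayley_algebra_composition_algebra:
  fixes sc :: "'k::field \<Rightarrow> 'v::ab_group_add \<Rightarrow> 'v"
  assumes "cayley_algebra sc mul one nrm"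
  shows "composition_algebra sc mul one nrm"
proof -
  interpret vs: vector_space sc
    using assms by (simp add: cayley_algebra_def)
  have "one \<noteq> 0"
  proof
    assume "one = 0"
    have "mul 0 x = 0" for x
      using assms by (metis cayley_algebra_def bilinear_mult_def Vector_Spaces.linear_iff vs.scale_zero_left)
    then have "(UNIV :: 'v set) = vs.span {}"
      using assms \<open>one = 0\<close> by (auto simp: cayley_algebra_def)
    then show False
      using assms vs.dim_span[of "{}"] vs.dim_eq_card_independent[OF vs.independent_empty]
      by (simp add: cayley_algebra_def)
  qed
  then show ?thesis
    using assms by unfold_locales (auto simp: cayley_algebra_def)
qed

lemma cayley_division_algebra_anisotropic:
  fixes sc :: "'k::field \<Rightarrow> 'v::ab_group_add \<Rightarrow> 'v"
  assumes cayley: "cayley_algebra sc mul one nrm" and division: "division_algebra mul"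
  obtains B where "anisotropic_composition_algebra sc mul one nrm B"
proof -
  interpret composition_algebra sc mul one nrm
    using cayley by (rule cayley_algebra_composition_algebra)
  obtain B where B: "vs.independent B" "UNIV \<subseteq> vs.span B" "card B = vs.dim (UNIV :: 'v set)"
    using vs.basis_exists[of UNIV] by blast
  then have "finite B"
    using cayley by (intro card_ge_0_finite) (simp add: cayley_algebra_def)
  then have "finite_dimensional_composition_algebra sc mul one nrm B"
    using B by unfold_locales auto
  then show ?thesis
    using that division_algebra_anisotropic[OF division]
    by (simp add: anisotropic_composition_algebra_def anisotropic_composition_algebra_axioms_def)
qed

theorem lemma4p4:
  fixes sc :: "'k::field \<Rightarrow> 'v::ab_group_add \<Rightarrow> 'v"
    and mul :: "'v \<Rightarrow> 'v \<Rightarrow> 'v" and one :: 'v and nrm :: "'v \<Rightarrow> 'k"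
    and K :: "'v set" and x :: 'v and \<phi> :: "'v \<Rightarrow> 'v"
  assumes "cayley_algebra sc mul one nrm"
    and "division_algebra mul"
    and "two_dim_composition_subalgebra sc mul one nrm K"
    and "local_automorphism sc mul \<phi>"
  shows "\<exists>\<psi>. algebra_automorphism sc mul \<psi> \<and> (\<forall>k\<in>K. \<psi> k = \<phi> k) \<and> \<psi> x = \<phi> x"
proof -
  obtain B where "anisotropic_composition_algebra sc mul one nrm B"
    using cayley_division_algebra_anisotropic[OF assms(1,2)] .
  then interpret anisotropic_composition_algebra sc mul one nrm B .
  show ?thesis
    using assms(1,3,4) two_dim_composition_subalgebra_iff
    by (intro local_automorphism_agrees_on_subalgebra_and_point) (auto simp: cayley_algebra_def)
qed

end
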